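(* Let $Q=\{0,1,\dots,n-1\}$ and alphabet $\{a,b\}$, and define three DFAs on $Q$, all with $b$ acting by $i\mapsto i+1$ for $0\le i\le n-2$ and $n-1\mapsto 0$: (1) the Černý automaton $\mathscr{C}_n$ ($n\ge 2$): $a$ fixes $i$ for $0\le i\le n-2$ and sends $n-1\mapsto 0$; (2) $\mathscr{L}_n$ ($n\ge 3$): $a$ sends $i\mapsto i+1$ for $0\le i\le n-4$, $n-3\mapsto n-1$, $n-2\mapsto 0$, $n-1\mapsto 0$; (3) $\mathscr{V}_n$ ($n\ge 2$): $a$ sends $i\mapsto i+1$ for $0\le i\le n-3$, $n-2\mapsto 0$, $n-1\mapsto 0$. Then $rc(Syn(\mathscr{C}_n))=rc(Syn(\mathscr{L}_n))=rc(Syn(\mathscr{V}_n))=n$.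
   Context: A DFA $\langle Q,\Sigma,\delta\rangle$ has a total transition function $\delta:Q\times\Sigma\to Q$ extended to words; it is synchronizing if some word $w$ satisfies $\delta(q,w)=\delta(q',w)$ for all $q,q'\in Q$, and $Syn(\mathscr{A})$ denotes the set of all such words. A language $L$ is ideal if $L=\Sigma^*L\Sigma^*$ (each $Syn(\mathscr{A})$ is ideal). The reset complexity $rc(L)$ of an ideal language $L$ is the minimal number of states of a synchronizing DFA $\mathscr{B}$ with $Syn(\mathscr{B})=L$. *)

theory Defs
  imports Main
begin

datatype sym = SymA | SymB

definition delta_word :: "('q \<Rightarrow> 'a \<Rightarrow> 'q) \<Rightarrow> 'q \<Rightarrow> 'a list \<Rightarrow> 'q" where
  "delta_word \<delta> q w = foldl \<delta> q w"

definition is_dfa :: "'q set \<Rightarrow> ('q \<Rightarrow> 'a \<Rightarrow> 'q) \<Rightarrow> bool" where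
  "is_dfa Q \<delta> \<longleftrightarrow> finite Q \<and> Q \<noteq> {} \<and> (\<forall>q\<in>Q. \<forall>c. \<delta> q c \<in> Q)"

definition Syn :: "'q set \<Rightarrow> ('q \<Rightarrow> 'a \<Rightarrow> 'q) \<Rightarrow> 'a list set" where
  "Syn Q \<delta> = {w. \<forall>q\<in>Q. \<forall>q'\<in>Q. delta_word \<delta> q w = delta_word \<delta> q' w}"

definition synchronizing :: "'q set \<Rightarrow> ('q \<Rightarrow> 'a \<Rightarrow> 'q) \<Rightarrow> bool" where
  "synchronizing Q \<delta> \<longleftrightarrow> Syn Q \<delta> \<noteq> {}"

text \<open>Reset complexity: minimal number of states of a synchronizing DFA (over the same
  alphabet) whose set of synchronizing words is L. Any finite state set is represented,
  up to renaming, by {0..<m}.\<close>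
definition rc :: "'a list set \<Rightarrow> nat" where
  "rc L = (LEAST m. \<exists>\<delta> :: nat \<Rightarrow> 'a \<Rightarrow> nat.
             is_dfa {0..<m} \<delta> \<and> synchronizing {0..<m} \<delta> \<and> Syn {0..<m} \<delta> = L)"

definition shift :: "nat \<Rightarrow> nat \<Rightarrow> nat" where
  "shift n q = (if q + 1 < n then q + 1 else 0)"

definition cerny :: "nat \<Rightarrow> nat \<Rightarrow> sym \<Rightarrow> nat" where
  "cerny n q c = (case c of
      SymA \<Rightarrow> (if q + 1 = n then 0 else q)
    | SymB \<Rightarrow> shift n q)"

definition L_aut :: "nat \<Rightarrow> nat \<Rightarrow> sym \<Rightarrow> nat" where
  "L_aut n q c = (case c of
      SymA \<Rightarrow> (if q + 3 < n then q + 1 else if q + 3 = n then n - 1 else 0)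
    | SymB \<Rightarrow> shift n q)"

definition V_aut :: "nat \<Rightarrow> nat \<Rightarrow> sym \<Rightarrow> nat" where
  "V_aut n q c = (case c of
      SymA \<Rightarrow> (if q + 2 < n then q + 1 else 0)
    | SymB \<Rightarrow> shift n q)"

end

theory Submission
  imports Defs
begin

text \<open>If a word \<open>y\<close> acts on the \<open>n\<close> states so that \<open>y\<^sup>n\<^sup>-\<^sup>1\<close> synchronizes but \<open>y\<^sup>n\<^sup>-\<^sup>2\<close> does not, then
  any DFA with the same synchronizing words has at least \<open>n\<close> states: in it the images of the
  state set under \<open>y\<^sup>0, y\<^sup>1, \<dots>, y\<^sup>n\<^sup>-\<^sup>1\<close> form a strictly decreasing chain ending in a singleton.
  For \<open>\<C>\<^sub>n\<close> and \<open>\<V>\<^sub>n\<close> the words \<open>b\<^sup>n\<^sup>-\<^sup>1a\<close> and \<open>b\<^sup>n\<^sup>-\<^sup>2a\<close> act as \<open>q \<mapsto> q - 1\<close> (truncated at 0), and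
  for \<open>\<L>\<^sub>n\<close> the word \<open>a\<^sup>n\<^sup>-\<^sup>2b\<^sup>2\<close> acts as \<open>q \<mapsto> min (q + 1) (n - 1)\<close>; both need exactly \<open>n - 1\<close>
  iterations to collapse the states.\<close>

lemma delta_word_Nil [simp]: "delta_word \<delta> q [] = q"
  by (simp add: delta_word_def)

lemma delta_word_Cons [simp]: "delta_word \<delta> q (c # w) = delta_word \<delta> (\<delta> q c) w"
  by (simp add: delta_word_def)

lemma delta_word_append [simp]: "delta_word \<delta> q (u @ v) = delta_word \<delta> (delta_word \<delta> q u) v"
  by (simp add: delta_word_def)

lemma delta_word_concat_replicate:
  "delta_word \<delta> q (concat (replicate i y)) = ((\<lambda>p. delta_word \<delta> p y) ^^ i) q"
  by (induction i arbitrary: q) (simp_all add: funpow_Suc_right del: funpow.simps)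

lemma delta_word_replicate: "delta_word \<delta> q (replicate i c) = ((\<lambda>p. \<delta> p c) ^^ i) q"
  using delta_word_concat_replicate[of \<delta> q i "[c]"] by simp

lemma delta_word_closed:
  assumes "is_dfa Q \<delta>" "q \<in> Q" shows "delta_word \<delta> q w \<in> Q"
  using assms by (induction w arbitrary: q) (auto simp: is_dfa_def)

text \<open>The image \<open>g ` Q\<close> satisfies the hypotheses for \<open>k - 1\<close>, and it is a proper subset of \<open>Q\<close>:
  if \<open>g\<close> were onto \<open>Q\<close>, the two points separated by \<open>g\<^sup>k\<close> would have preimages separated
  by \<open>g\<^sup>k\<^sup>+\<^sup>1\<close>.\<close>
lemma card_ge_if_funpow_collapses:
  assumes "finite Q" "g ` Q \<subseteq> Q"
    and "\<forall>q\<in>Q. \<forall>q'\<in>Q. (g ^^ Suc k) q = (g ^^ Suc k) q'"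
    and "q1 \<in> Q" "q2 \<in> Q" "(g ^^ k) q1 \<noteq> (g ^^ k) q2"
  shows "k + 2 \<le> card Q"
  using assms
proof (induction k arbitrary: Q q1 q2)
  case 0
  have "card {q1, q2} \<le> card Q"
    using "0.prems"(1,4,5) by (intro card_mono) auto
  moreover have "card {q1, q2} = 2"
    using "0.prems"(6) by simp
  ultimately show ?case by simp
next
  case (Suc k)
  have "k + 2 \<le> card (g ` Q)"
  proof (rule Suc.IH)
    show "finite (g ` Q)" "g ` g ` Q \<subseteq> g ` Q" "g q1 \<in> g ` Q" "g q2 \<in> g ` Q"
      using Suc.prems(1,2,4,5) by auto
    show "\<forall>q\<in>g ` Q. \<forall>q'\<in>g ` Q. (g ^^ Suc k) q = (g ^^ Suc k) q'"
      using Suc.prems(3)[unfolded funpow_Suc_right[of "Suc k" g] comp_apply] by blast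
    show "(g ^^ k) (g q1) \<noteq> (g ^^ k) (g q2)"
      using Suc.prems(6) by (simp add: funpow_Suc_right del: funpow.simps)
  qed
  moreover have "g ` Q \<noteq> Q"
  proof
    assume "g ` Q = Q"
    then obtain p1 p2 where "p1 \<in> Q" "p2 \<in> Q" "q1 = g p1" "q2 = g p2"
      using Suc.prems(4,5) by (metis imageE)
    moreover from this have "(g ^^ Suc (Suc k)) p1 \<noteq> (g ^^ Suc (Suc k)) p2"
      using Suc.prems(6) by (simp add: funpow_Suc_right del: funpow.simps)
    ultimately show False using Suc.prems(3) by blast
  qed
  then have "card (g ` Q) < card Q"
    using Suc.prems(1,2) by (simp add: psubset_card_mono psubsetI)
  ultimately show ?case by simp
qed

lemma card_ge_if_power_threshold:
  assumes "is_dfa Q \<delta>"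
    and "concat (replicate (Suc k) y) \<in> Syn Q \<delta>" "concat (replicate k y) \<notin> Syn Q \<delta>"
  shows "k + 2 \<le> card Q"
proof -
  let ?g = "\<lambda>p. delta_word \<delta> p y"
  obtain q1 q2 where "q1 \<in> Q" "q2 \<in> Q" "(?g ^^ k) q1 \<noteq> (?g ^^ k) q2"
    using assms(3) unfolding Syn_def mem_Collect_eq delta_word_concat_replicate by blast
  moreover have "finite Q"
    using assms(1) by (simp add: is_dfa_def)
  moreover have "?g ` Q \<subseteq> Q"
    using delta_word_closed[OF assms(1)] by auto
  moreover have "\<forall>q\<in>Q. \<forall>q'\<in>Q. (?g ^^ Suc k) q = (?g ^^ Suc k) q'"
    using assms(2) unfolding Syn_def mem_Collect_eq delta_word_concat_replicate .
  ultimately show ?thesis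
    by (intro card_ge_if_funpow_collapses[of Q ?g k q1 q2])
qed

lemma rc_eq_if_power_threshold:
  fixes A :: "nat \<Rightarrow> 'a \<Rightarrow> nat"
  assumes "is_dfa {0..<n} A" "n \<ge> 2"
    and "concat (replicate (n - 1) y) \<in> Syn {0..<n} A"
    and "concat (replicate (n - 2) y) \<notin> Syn {0..<n} A"
  shows "rc (Syn {0..<n} A) = n"
  unfolding rc_def
proof (rule Least_equality)
  show "\<exists>\<delta>::nat \<Rightarrow> 'a \<Rightarrow> nat. is_dfa {0..<n} \<delta> \<and> synchronizing {0..<n} \<delta> \<and> Syn {0..<n} \<delta> = Syn {0..<n} A"
    using assms(1,3) unfolding synchronizing_def by blast
next
  fix m
  assume "\<exists>\<delta>::nat \<Rightarrow> 'a \<Rightarrow> nat. is_dfa {0..<m} \<delta> \<and> synchronizing {0..<m} \<delta> \<and> Syn {0..<m} \<delta> = Syn {0..<n} A"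
  then obtain \<delta> :: "nat \<Rightarrow> 'a \<Rightarrow> nat" where "is_dfa {0..<m} \<delta>" "Syn {0..<m} \<delta> = Syn {0..<n} A"
    by blast
  moreover have "Suc (n - 2) = n - 1" using assms(2) by simp
  ultimately have "n - 2 + 2 \<le> card {0..<m}"
    using assms(3,4) by (intro card_ge_if_power_threshold[of _ \<delta> _ y]) simp_all
  then show "n \<le> m" using assms(2) by simp
qed

lemma rc_eq_if_word_acts_as_pred:
  fixes A :: "nat \<Rightarrow> 'a \<Rightarrow> nat"
  assumes "is_dfa {0..<n} A" "n \<ge> 2" and y: "\<forall>q<n. delta_word A q y = q - 1"
  shows "rc (Syn {0..<n} A) = n"
proof (rule rc_eq_if_power_threshold[OF assms(1,2)])
  let ?g = "\<lambda>p. delta_word A p y"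
  have pow: "(?g ^^ i) q = q - i" if "q < n" for i q
    using that y by (induction i) auto
  then show "concat (replicate (n - 1) y) \<in> Syn {0..<n} A"
    by (simp add: Syn_def delta_word_concat_replicate)
  have "(?g ^^ (n - 2)) 0 \<noteq> (?g ^^ (n - 2)) (n - 1)" "0 \<in> {0..<n}" "n - 1 \<in> {0..<n}"
    using pow assms(2) by auto
  then show "concat (replicate (n - 2) y) \<notin> Syn {0..<n} A"
    unfolding Syn_def mem_Collect_eq delta_word_concat_replicate by blast
qed

lemma rc_eq_if_word_acts_as_succ:
  fixes A :: "nat \<Rightarrow> 'a \<Rightarrow> nat"
  assumes "is_dfa {0..<n} A" "n \<ge> 2" and y: "\<forall>q<n. delta_word A q y = min (q + 1) (n - 1)"
  shows "rc (Syn {0..<n} A) = n"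
proof (rule rc_eq_if_power_threshold[OF assms(1,2)])
  let ?g = "\<lambda>p. delta_word A p y"
  have pow: "(?g ^^ i) q = min (q + i) (n - 1)" if "q < n" for i q
    using that y by (induction i) (auto simp: min_def)
  then show "concat (replicate (n - 1) y) \<in> Syn {0..<n} A"
    by (simp add: Syn_def delta_word_concat_replicate)
  have "(?g ^^ (n - 2)) 0 \<noteq> (?g ^^ (n - 2)) (n - 1)" "0 \<in> {0..<n}" "n - 1 \<in> {0..<n}"
    using pow assms(2) by auto
  then show "concat (replicate (n - 2) y) \<notin> Syn {0..<n} A"
    unfolding Syn_def mem_Collect_eq delta_word_concat_replicate by blast
qed

lemma funpow_shift: "q < n \<Longrightarrow> (shift n ^^ k) q = (q + k) mod n"
proof (induction k)
  case (Suc k)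
  have "(q + k) mod n < n" using Suc.prems by simp
  then show ?case using Suc by (simp add: shift_def mod_Suc del: mod_less_divisor)
qed simp

lemma funpow_shift_diff:
  assumes "q < n" "k \<le> n"
  shows "(shift n ^^ (n - k)) q = (if k \<le> q then q - k else q + (n - k))"
proof (cases "k \<le> q")
  case True
  then have "q + (n - k) = (q - k) + n" "q - k < n" using assms by linarith+
  then show ?thesis using True funpow_shift[OF assms(1)] by (simp only: mod_add_self2 mod_less) simp
next
  case False
  then show ?thesis using assms funpow_shift[OF assms(1)] by simp
qed

lemma cerny_dfa: "n \<ge> 2 \<Longrightarrow> is_dfa {0..<n} (cerny n)"
  by (auto simp: is_dfa_def cerny_def shift_def split: sym.splits)

lemma L_aut_dfa: "n \<ge> 3 \<Longrightarrow> is_dfa {0..<n} (L_aut n)"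
  by (auto simp: is_dfa_def L_aut_def shift_def split: sym.splits)

lemma V_aut_dfa: "n \<ge> 2 \<Longrightarrow> is_dfa {0..<n} (V_aut n)"
  by (auto simp: is_dfa_def V_aut_def shift_def split: sym.splits)

lemma cerny_word_acts_as_pred:
  assumes "n \<ge> 2"
  shows "\<forall>q<n. delta_word (cerny n) q (replicate (n - 1) SymB @ [SymA]) = q - 1"
proof (intro allI impI)
  fix q assume "q < n"
  have "(\<lambda>p. cerny n p SymB) = shift n" by (simp add: cerny_def)
  then have "delta_word (cerny n) q (replicate (n - 1) SymB) = (if 1 \<le> q then q - 1 else q + (n - 1))"
    using funpow_shift_diff[OF \<open>q < n\<close>, of 1] assms by (simp add: delta_word_replicate)
  then show "delta_word (cerny n) q (replicate (n - 1) SymB @ [SymA]) = q - 1"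
    using \<open>q < n\<close> by (simp add: cerny_def)
qed

lemma V_aut_word_acts_as_pred:
  assumes "n \<ge> 2"
  shows "\<forall>q<n. delta_word (V_aut n) q (replicate (n - 2) SymB @ [SymA]) = q - 1"
proof (intro allI impI)
  fix q assume "q < n"
  have "(\<lambda>p. V_aut n p SymB) = shift n" by (simp add: V_aut_def)
  then have "delta_word (V_aut n) q (replicate (n - 2) SymB) = (if 2 \<le> q then q - 2 else q + (n - 2))"
    using funpow_shift_diff[OF \<open>q < n\<close>, of 2] assms by (simp add: delta_word_replicate)
  then show "delta_word (V_aut n) q (replicate (n - 2) SymB @ [SymA]) = q - 1"
    using \<open>q < n\<close> by (auto simp: V_aut_def)
qed

lemma L_aut_SymA_funpow_increments:
  "q + j + 3 \<le> n \<Longrightarrow> ((\<lambda>p. L_aut n p SymA) ^^ j) q = q + j"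
  by (induction j) (auto simp: L_aut_def)

text \<open>Under \<open>a\<close> the states \<open>0, \<dots>, n - 3, n - 1\<close> form a cycle of length \<open>n - 1\<close>, entered from \<open>n - 2\<close>
  at \<open>0\<close>; so \<open>a\<^sup>n\<^sup>-\<^sup>2\<close> moves every state of the cycle one step back along it.\<close>
lemma L_aut_SymA_funpow:
  assumes "n \<ge> 3" "q < n"
  shows "((\<lambda>p. L_aut n p SymA) ^^ (n - 2)) q = (if q = 0 then n - 1 else if q + 3 \<le> n then q - 1 else n - 3)"
proof -
  let ?a = "\<lambda>p. L_aut n p SymA"
  have a_last: "?a (n - 3) = n - 1" "?a (n - 1) = 0" and a_top: "q + 3 > n \<Longrightarrow> ?a q = 0"
    using assms by (auto simp: L_aut_def)
  have from_0: "(?a ^^ j) 0 = j" if "j + 3 \<le> n" for j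
    using L_aut_SymA_funpow_increments[of 0 j n] that by simp
  consider "q = 0" | "0 < q" "q + 3 \<le> n" | "q + 3 > n" by linarith
  then show ?thesis
  proof cases
    case 1
    have "n - 2 = Suc (n - 3)" using assms by linarith
    then have "(?a ^^ (n - 2)) q = ?a ((?a ^^ (n - 3)) 0)"
      using 1 by (simp only: funpow.simps(2) comp_apply)
    then show ?thesis using 1 assms a_last from_0[of "n - 3"] by simp
  next
    case 2
    have "n - 2 = (q - 1) + Suc (Suc (n - 3 - q))" using 2 by linarith
    then have "(?a ^^ (n - 2)) q = (?a ^^ (q - 1)) (?a (?a ((?a ^^ (n - 3 - q)) q)))"
      by (simp only: funpow_add funpow.simps(2) comp_apply)
    then show ?thesis
      using 2 a_last from_0[of "q - 1"] L_aut_SymA_funpow_increments[of q "n - 3 - q" n] by simp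
  next
    case 3
    have "n - 2 = Suc (n - 3)" using assms by linarith
    then have "(?a ^^ (n - 2)) q = (?a ^^ (n - 3)) (?a q)"
      by (simp only: funpow_Suc_right comp_apply)
    then show ?thesis using 3 assms a_top from_0[of "n - 3"] by simp
  qed
qed

lemma L_aut_word_acts_as_succ:
  assumes "n \<ge> 3"
  shows "\<forall>q<n. delta_word (L_aut n) q (replicate (n - 2) SymA @ replicate 2 SymB) = min (q + 1) (n - 1)"
proof (intro allI impI)
  fix q assume "q < n"
  let ?p = "((\<lambda>p. L_aut n p SymA) ^^ (n - 2)) q"
  have p: "?p = (if q = 0 then n - 1 else if q + 3 \<le> n then q - 1 else n - 3)"
    using L_aut_SymA_funpow[OF assms \<open>q < n\<close>] .
  then have "?p < n" using assms by auto
  moreover have "(\<lambda>p. L_aut n p SymB) = shift n" by (simp add: L_aut_def)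
  ultimately have "delta_word (L_aut n) q (replicate (n - 2) SymA @ replicate 2 SymB) = (?p + 2) mod n"
    by (simp add: delta_word_replicate funpow_shift)
  also have "\<dots> = min (q + 1) (n - 1)"
    using assms \<open>q < n\<close> by (simp add: p mod_Suc; linarith)
  finally show "delta_word (L_aut n) q (replicate (n - 2) SymA @ replicate 2 SymB) = min (q + 1) (n - 1)" .
qed

theorem theorem1:
  fixes n :: nat
  shows "(n \<ge> 2 \<longrightarrow> rc (Syn {0..<n} (cerny n)) = n)
       \<and> (n \<ge> 3 \<longrightarrow> rc (Syn {0..<n} (L_aut n)) = n)
       \<and> (n \<ge> 2 \<longrightarrow> rc (Syn {0..<n} (V_aut n)) = n)"
  using rc_eq_if_word_acts_as_pred[OF cerny_dfa _ cerny_word_acts_as_pred]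
    rc_eq_if_word_acts_as_succ[OF L_aut_dfa _ L_aut_word_acts_as_succ]
    rc_eq_if_word_acts_as_pred[OF V_aut_dfa _ V_aut_word_acts_as_pred]
  by auto

end
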